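(* Let $X=\{a_1,\dots,a_\ell\}$ be a finite set of $\ell$ distinct points, $N\ge2$, $\lambda_*\in\mathcal{P}(X)$, and let $\gamma$ be a probability measure on $X^N$. The following are equivalent: (i) $\gamma=\sum_{\nu=1}^\ell\alpha^{(\nu)}S(\delta_{T_1(a_\nu)}\otimes\cdots\otimes\delta_{T_N(a_\nu)})$ for some maps $T_1,\dots,T_N:X\to X$ and some $\alpha^{(1)},\dots,\alpha^{(\ell)}\ge0$ satisfying $\sum_{\nu=1}^\ell\lambda^{(\nu)}_i\alpha^{(\nu)}=(\lambda_* )_i$ for $i=1,\dots,\ell$, where $\lambda^{(\nu)}=\frac1N\sum_{k=1}^N\delta_{T_k(a_\nu)}$, i.e. $\lambda^{(\nu)}_i=\frac1N\#\{k:T_k(a_\nu)=a_i\}$; (ii) $\gamma=\sum_{\nu=1}^\ell\alpha^{(\nu)}\psi_N(\lambda^{(\nu)})$ for some $\lambda^{(1)},\dots,\lambda^{(\ell)}\in\mathcal{P}_{\frac1N}(X)$ and some $\alpha^{(1)},\dots,\alpha^{(\ell)}\ge0$ satisfying $\sum_{\nu=1}^\ell\lambda^{(\nu)}_i\alpha^{(\nu)}=(\lambda_* )_i$ for $i=1,\dots,\ell$. Moreover, if $\gamma$ is of form (i), then it is of form (ii) with the same $\lambda^{(\nu)}$ and $\alpha^{(\nu)}$; in particular $\gamma$ depends on $T_1,\dots,T_N$ only through the $\lambda^{(\nu)}$. Conversely, if $\gamma$ is of form (ii), then it is of form (i) with the same $\lambda^{(\nu)}$ and $\alpha^{(\nu)}$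 and with $T_1,\dots,T_N$ any maps $X\to X$ satisfying $\lambda^{(\nu)}=\frac1N\sum_{k=1}^N\delta_{T_k(a_\nu)}$ for all $\nu$.
   Context: $\mathcal{P}(X)$ denotes probability measures on $X$, identified with vectors $(\lambda_i)$, $\lambda_i=\lambda(\{a_i\})$; $\mathcal{P}_{\frac1N}(X)=\{\lambda\in\mathcal{P}(X):\lambda_i\in\frac1N\mathbb{Z}\ \forall i\}$. The symmetrization operator is $(S\gamma)(A_1\times\cdots\times A_N)=\frac1{N!}\sum_{\sigma\in S_N}\gamma(A_{\sigma(1)}\times\cdots\times A_{\sigma(N)})$. For $\lambda\in\mathcal{P}_{\frac1N}(X)$, $\psi_N(\lambda)=S(\delta_{a_{i_1}}\otimes\cdots\otimes\delta_{a_{i_N}})$ where $i_1\le\dots\le i_N$ is the nondecreasing index sequence in which each $i$ appears exactly $N\lambda_i$ times. *)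

theory Defs
  imports "HOL-Analysis.Analysis"
begin

text \<open>Setting: X = {a 1, ..., a l} with a injective on {1..l}.
  Measures on X are identified with vectors indexed by {1..l} (type nat => real);
  measures on X^N are given by their point masses on lists of length N
  (type 'a list => real).\<close>

definition prob_vec :: "nat \<Rightarrow> (nat \<Rightarrow> real) \<Rightarrow> bool" where
  "prob_vec l lam \<longleftrightarrow> (\<forall>i\<in>{1..l}. lam i \<ge> 0) \<and> (\<Sum>i=1..l. lam i) = 1"

definition prob_vec_N :: "nat \<Rightarrow> nat \<Rightarrow> (nat \<Rightarrow> real) \<Rightarrow> bool" where
  "prob_vec_N l N lam \<longleftrightarrow> prob_vec l lam \<and> (\<forall>i\<in>{1..l}. \<exists>k::int. lam i = of_int k / real N)"

definition XN :: "(nat \<Rightarrow> 'a) \<Rightarrow> nat \<Rightarrow> nat \<Rightarrow> 'a list set" where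
  "XN a l N = {xs. length xs = N \<and> set xs \<subseteq> a ` {1..l}}"

definition prob_on_XN :: "(nat \<Rightarrow> 'a) \<Rightarrow> nat \<Rightarrow> nat \<Rightarrow> ('a list \<Rightarrow> real) \<Rightarrow> bool" where
  "prob_on_XN a l N g \<longleftrightarrow> (\<forall>xs. g xs \<ge> 0) \<and> (\<forall>xs. xs \<notin> XN a l N \<longrightarrow> g xs = 0)
     \<and> (\<Sum>xs\<in>XN a l N. g xs) = 1"

definition dirac_prod :: "'a list \<Rightarrow> 'a list \<Rightarrow> real" where
  "dirac_prod xs = (\<lambda>ys. if ys = xs then 1 else 0)"

definition symmetrize :: "nat \<Rightarrow> ('a list \<Rightarrow> real) \<Rightarrow> 'a list \<Rightarrow> real" where
  "symmetrize N g ys = (if length ys = N then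
     (1 / fact N) * (\<Sum>\<sigma>\<in>{\<sigma>. \<sigma> permutes {0..<N}}. g (map (\<lambda>j. ys ! \<sigma> j) [0..<N]))
   else 0)"

definition index_seq :: "nat \<Rightarrow> nat \<Rightarrow> (nat \<Rightarrow> real) \<Rightarrow> nat list" where
  "index_seq l N lam = concat (map (\<lambda>i. replicate (nat \<lfloor>real N * lam i\<rfloor>) i) [1..<l+1])"

definition psi :: "(nat \<Rightarrow> 'a) \<Rightarrow> nat \<Rightarrow> nat \<Rightarrow> (nat \<Rightarrow> real) \<Rightarrow> 'a list \<Rightarrow> real" where
  "psi a l N lam = symmetrize N (dirac_prod (map a (index_seq l N lam)))"

definition lam_of :: "(nat \<Rightarrow> 'a) \<Rightarrow> nat \<Rightarrow> (nat \<Rightarrow> 'a \<Rightarrow> 'a) \<Rightarrow> nat \<Rightarrow> nat \<Rightarrow> real" where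
  "lam_of a N T \<nu> i = card {k\<in>{1..N}. T k (a \<nu>) = a i} / real N"

definition is_form_i :: "(nat \<Rightarrow> 'a) \<Rightarrow> nat \<Rightarrow> nat \<Rightarrow> (nat \<Rightarrow> real) \<Rightarrow> ('a list \<Rightarrow> real)
    \<Rightarrow> (nat \<Rightarrow> 'a \<Rightarrow> 'a) \<Rightarrow> (nat \<Rightarrow> real) \<Rightarrow> bool" where
  "is_form_i a l N lstar g T \<alpha> \<longleftrightarrow>
     (\<forall>k\<in>{1..N}. \<forall>x\<in>a ` {1..l}. T k x \<in> a ` {1..l}) \<and>
     (\<forall>\<nu>\<in>{1..l}. \<alpha> \<nu> \<ge> 0) \<and>
     (\<forall>i\<in>{1..l}. (\<Sum>\<nu>=1..l. lam_of a N T \<nu> i * \<alpha> \<nu>) = lstar i) \<and>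
     g = (\<lambda>ys. \<Sum>\<nu>=1..l. \<alpha> \<nu> * symmetrize N (dirac_prod (map (\<lambda>k. T k (a \<nu>)) [1..<N+1])) ys)"

definition is_form_ii :: "(nat \<Rightarrow> 'a) \<Rightarrow> nat \<Rightarrow> nat \<Rightarrow> (nat \<Rightarrow> real) \<Rightarrow> ('a list \<Rightarrow> real)
    \<Rightarrow> (nat \<Rightarrow> nat \<Rightarrow> real) \<Rightarrow> (nat \<Rightarrow> real) \<Rightarrow> bool" where
  "is_form_ii a l N lstar g lam \<alpha> \<longleftrightarrow>
     (\<forall>\<nu>\<in>{1..l}. prob_vec_N l N (lam \<nu>)) \<and>
     (\<forall>\<nu>\<in>{1..l}. \<alpha> \<nu> \<ge> 0) \<and>
     (\<forall>i\<in>{1..l}. (\<Sum>\<nu>=1..l. lam \<nu> i * \<alpha> \<nu>) = lstar i) \<and>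
     g = (\<lambda>ys. \<Sum>\<nu>=1..l. \<alpha> \<nu> * psi a l N (lam \<nu>) ys)"

end

theory Submission
  imports Defs "HOL-Combinatorics.Permutations"
begin

text \<open>Since S averages over all reorderings of the N coordinates,
  S(\<delta>(x_1) \<otimes> ... \<otimes> \<delta>(x_N)) depends only on the multiset of the points x_k, and this
  multiset is N times the empirical measure (1/N) \<Sum>_k \<delta>(x_k). Hence the \<nu>-th term of form (i)
  is \<psi>_N(\<lambda>^(\<nu>)), the list (T_1(a_\<nu>), ..., T_N(a_\<nu>)) having empirical measure \<lambda>^(\<nu>).
  Conversely every \<lambda> in P_{1/N}(X) is the empirical measure of (a_{i_1}, ..., a_{i_N}), so
  reading off the k-th entries of these lists defines maps T_k realising any prescribed \<lambda>^(\<nu>).\<close>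

lemma symmetrize_eq_sum_permute_list:
  assumes "length ys = N"
  shows "symmetrize N g ys = (\<Sum>\<sigma>\<in>{\<sigma>. \<sigma> permutes {..<N}}. g (permute_list \<sigma> ys)) / fact N"
  using assms by (simp add: symmetrize_def permute_list_def atLeast0LessThan)

lemma symmetrize_permute_list_invariant:
  assumes "p permutes {..<N}"
  shows "symmetrize N (\<lambda>zs. g (permute_list p zs)) = symmetrize N g"
proof
  fix ys
  show "symmetrize N (\<lambda>zs. g (permute_list p zs)) ys = symmetrize N g ys"
  proof (cases "length ys = N")
    case True
    have "(\<Sum>\<sigma>\<in>{\<sigma>. \<sigma> permutes {..<N}}. g (permute_list p (permute_list \<sigma> ys)))
        = (\<Sum>\<sigma>\<in>{\<sigma>. \<sigma> permutes {..<N}}. g (permute_list (\<sigma> \<circ> p) ys))"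
      using assms True by (simp add: permute_list_compose)
    also have "\<dots> = (\<Sum>\<sigma>\<in>{\<sigma>. \<sigma> permutes {..<N}}. g (permute_list \<sigma> ys))"
      by (rule sum_permutations_compose_right[OF assms, symmetric])
    finally show ?thesis using True by (simp add: symmetrize_eq_sum_permute_list)
  qed (simp add: symmetrize_def)
qed

lemma permute_list_inv_eq_iff:
  assumes "p permutes {..<length xs}"
  shows "permute_list (inv p) zs = xs \<longleftrightarrow> zs = permute_list p xs"
proof
  assume zs: "permute_list (inv p) zs = xs"
  then have p: "p permutes {..<length zs}" using assms by (metis length_permute_list)
  then show "zs = permute_list p xs"
    using zs permutes_inv_o(2)[OF p] by (auto simp: permute_list_compose[symmetric])
next
  assume "zs = permute_list p xs"
  then show "permute_list (inv p) zs = xs"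
    using assms permutes_inv[OF assms] permutes_inv_o(1)[OF assms]
    by (simp add: permute_list_compose[symmetric])
qed

lemma symmetrize_dirac_prod_mset_cong:
  assumes "mset xs = mset ys" and "length ys = N"
  shows "symmetrize N (dirac_prod xs) = symmetrize N (dirac_prod ys)"
proof -
  obtain p where p: "p permutes {..<length ys}" "permute_list p ys = xs"
    using mset_eq_permutation[OF assms(1)] by blast
  have "dirac_prod xs = (\<lambda>zs. dirac_prod ys (permute_list (inv p) zs))"
    using permute_list_inv_eq_iff[OF p(1)] p(2) by (auto simp: dirac_prod_def)
  then show ?thesis
    using symmetrize_permute_list_invariant[OF permutes_inv, of p N] p(1) assms(2) by simp
qed

lemma index_seq_Suc:
  "index_seq (Suc l) N lam = index_seq l N lam @ replicate (nat \<lfloor>real N * lam (Suc l)\<rfloor>) (Suc l)"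
  by (simp add: index_seq_def)

lemma set_index_seq: "set (index_seq l N lam) \<subseteq> {1..l}"
  by (induction l) (auto simp: index_seq_Suc, simp add: index_seq_def)

lemma count_mset_index_seq:
  "i \<in> {1..l} \<Longrightarrow> count (mset (index_seq l N lam)) i = nat \<lfloor>real N * lam i\<rfloor>"
proof (induction l)
  case (Suc l)
  have "Suc l \<notin> set (index_seq l N lam)" using set_index_seq[of l N lam] by auto
  then show ?case using Suc by (cases "i = Suc l") (auto simp: index_seq_Suc)
qed simp

lemma length_index_seq: "length (index_seq l N lam) = (\<Sum>i=1..l. nat \<lfloor>real N * lam i\<rfloor>)"
  by (induction l) (auto simp: index_seq_Suc, simp add: index_seq_def)

lemma index_seq_cong: "(\<And>i. i \<in> {1..l} \<Longrightarrow> lam i = lam' i) \<Longrightarrow> index_seq l N lam = index_seq l N lam'"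
  unfolding index_seq_def by (intro arg_cong[where f=concat] map_cong) auto

lemma prob_vec_N_scaled_integral:
  assumes "prob_vec_N l N lam" and "i \<in> {1..l}"
  shows "real (nat \<lfloor>real N * lam i\<rfloor>) = real N * lam i"
proof -
  obtain k :: int where k: "lam i = of_int k / real N"
    using assms unfolding prob_vec_N_def by blast
  have "lam i \<ge> 0" using assms unfolding prob_vec_N_def prob_vec_def by blast
  with k have "real N * lam i = of_int (if N = 0 then 0 else k)" "0 \<le> (if N = 0 then 0 else k)"
    by (auto simp: zero_le_divide_iff)
  then show ?thesis by simp
qed

lemma length_index_seq_prob_vec_N:
  assumes "prob_vec_N l N lam"
  shows "length (index_seq l N lam) = N"
proof -
  have "real (length (index_seq l N lam)) = (\<Sum>i=1..l. real N * lam i)"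
    using prob_vec_N_scaled_integral[OF assms] by (simp add: length_index_seq)
  also have "\<dots> = real N"
    using assms by (simp add: prob_vec_N_def prob_vec_def flip: sum_distrib_left)
  finally show ?thesis by linarith
qed

lemma count_mset_map_inj_on:
  assumes "inj_on a A" and "set xs \<subseteq> A" and "i \<in> A"
  shows "count (mset (map a xs)) (a i) = count (mset xs) i"
  using assms(2) by (induction xs) (auto dest: inj_onD[OF assms(1)] simp: assms(3))

definition empirical_vec :: "(nat \<Rightarrow> 'a) \<Rightarrow> nat \<Rightarrow> 'a list \<Rightarrow> nat \<Rightarrow> real" where
  "empirical_vec a N xs i = real (count (mset xs) (a i)) / real N"

lemma lam_of_eq_empirical_vec:
  "lam_of a N T \<nu> = empirical_vec a N (map (\<lambda>k. T k (a \<nu>)) [1..<N+1])"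
proof
  fix i
  have "count (mset (map (\<lambda>k. T k (a \<nu>)) [1..<N+1])) (a i) = length (filter (\<lambda>k. T k (a \<nu>) = a i) [1..<N+1])"
    unfolding count_mset count_list_eq_length_filter by (simp add: filter_map o_def eq_commute)
  also have "\<dots> = card {k\<in>{1..N}. T k (a \<nu>) = a i}"
    by (subst distinct_length_filter) (auto intro!: arg_cong[where f=card])
  finally show "lam_of a N T \<nu> i = empirical_vec a N (map (\<lambda>k. T k (a \<nu>)) [1..<N+1]) i"
    by (simp add: lam_of_def empirical_vec_def)
qed

lemma sum_count_mset_image:
  fixes a :: "nat \<Rightarrow> 'a"
  assumes "inj_on a {1..l}" and "set xs \<subseteq> a ` {1..l}"
  shows "(\<Sum>i=1..l. count (mset xs) (a i)) = length xs"
proof -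
  have "(\<Sum>i=1..l. count (mset xs) (a i)) = (\<Sum>y\<in>a ` {1..l}. count (mset xs) y)"
    unfolding sum.reindex[OF assms(1)] o_def ..
  also have "\<dots> = (\<Sum>y\<in>set xs. count (mset xs) y)"
    using assms(2) by (intro sum.mono_neutral_right finite_imageI) auto
  also have "\<dots> = length xs"
    using size_multiset_overloaded_eq[of "mset xs"] by simp
  finally show ?thesis .
qed

lemma prob_vec_N_empirical_vec:
  assumes "inj_on a {1..l}" and "set xs \<subseteq> a ` {1..l}" and "length xs = N" and "N > 0"
  shows "prob_vec_N l N (empirical_vec a N xs)"
  unfolding prob_vec_N_def prob_vec_def empirical_vec_def
  using sum_count_mset_image[OF assms(1,2)] assms(3,4)
  by (auto simp flip: sum_divide_distrib of_nat_sum intro: exI[of _ "int (count (mset xs) _)"])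

lemma mset_map_index_seq_empirical_vec:
  assumes "inj_on a {1..l}" and "set xs \<subseteq> a ` {1..l}" and "N > 0"
  shows "mset (map a (index_seq l N (empirical_vec a N xs))) = mset xs"
proof (rule multiset_eqI)
  fix y
  show "count (mset (map a (index_seq l N (empirical_vec a N xs)))) y = count (mset xs) y"
  proof (cases "y \<in> a ` {1..l}")
    case True
    then obtain i where i: "i \<in> {1..l}" "y = a i" by blast
    then show ?thesis
      using count_mset_map_inj_on[OF assms(1) set_index_seq i(1)] count_mset_index_seq[OF i(1)] assms(3)
      by (simp add: empirical_vec_def)
  next
    case False
    then have "y \<notin> set (map a (index_seq l N (empirical_vec a N xs)))" "y \<notin> set xs"
      using set_index_seq assms(2) by fastforce+
    then show ?thesis by (metis count_mset_0_iff)
  qed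
qed

lemma empirical_vec_map_index_seq:
  assumes "inj_on a {1..l}" and "prob_vec_N l N lam" and "N > 0" and "i \<in> {1..l}"
  shows "empirical_vec a N (map a (index_seq l N lam)) i = lam i"
  using count_mset_map_inj_on[OF assms(1) set_index_seq assms(4)] count_mset_index_seq[OF assms(4)]
    prob_vec_N_scaled_integral[OF assms(2,4)] assms(3)
  by (simp add: empirical_vec_def)

lemma psi_empirical_vec:
  assumes "inj_on a {1..l}" and "set xs \<subseteq> a ` {1..l}" and "length xs = N" and "N > 0"
  shows "psi a l N (empirical_vec a N xs) = symmetrize N (dirac_prod xs)"
  unfolding psi_def
  using symmetrize_dirac_prod_mset_cong[OF mset_map_index_seq_empirical_vec[OF assms(1,2,4)] assms(3)] .

lemma prob_vec_N_lam_of: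
  fixes a :: "nat \<Rightarrow> 'a"
  assumes "inj_on a {1..l}" and "N > 0" and "\<forall>k\<in>{1..N}. T k (a \<nu>) \<in> a ` {1..l}"
  shows "prob_vec_N l N (lam_of a N T \<nu>)"
  unfolding lam_of_eq_empirical_vec using assms by (intro prob_vec_N_empirical_vec) auto

lemma psi_lam_of:
  fixes a :: "nat \<Rightarrow> 'a"
  assumes "inj_on a {1..l}" and "N > 0" and "\<forall>k\<in>{1..N}. T k (a \<nu>) \<in> a ` {1..l}"
  shows "psi a l N (lam_of a N T \<nu>) = symmetrize N (dirac_prod (map (\<lambda>k. T k (a \<nu>)) [1..<N+1]))"
  unfolding lam_of_eq_empirical_vec using assms by (intro psi_empirical_vec) auto

lemma is_form_i_imp_is_form_ii:
  assumes "inj_on a {1..l}" and "N > 0" and form_i: "is_form_i a l N lstar g T \<alpha>"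
  shows "is_form_ii a l N lstar g (lam_of a N T) \<alpha>"
proof -
  have "prob_vec_N l N (lam_of a N T \<nu>)"
    and "psi a l N (lam_of a N T \<nu>) = symmetrize N (dirac_prod (map (\<lambda>k. T k (a \<nu>)) [1..<N+1]))"
    if "\<nu> \<in> {1..l}" for \<nu>
    using form_i that prob_vec_N_lam_of[OF assms(1,2)] psi_lam_of[OF assms(1,2)]
    unfolding is_form_i_def by blast+
  then show ?thesis
    using form_i unfolding is_form_i_def is_form_ii_def by (auto intro!: sum.cong)
qed

lemma is_form_ii_imp_is_form_i:
  assumes "inj_on a {1..l}" and "N > 0" and form_ii: "is_form_ii a l N lstar g lam \<alpha>"
    and T: "\<forall>k\<in>{1..N}. \<forall>x\<in>a ` {1..l}. T k x \<in> a ` {1..l}"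
    and lam: "\<forall>\<nu>\<in>{1..l}. \<forall>i\<in>{1..l}. lam \<nu> i = lam_of a N T \<nu> i"
  shows "is_form_i a l N lstar g T \<alpha>"
proof -
  have "psi a l N (lam \<nu>) = symmetrize N (dirac_prod (map (\<lambda>k. T k (a \<nu>)) [1..<N+1]))"
    if "\<nu> \<in> {1..l}" for \<nu>
  proof -
    have "index_seq l N (lam \<nu>) = index_seq l N (lam_of a N T \<nu>)"
      using lam that by (intro index_seq_cong) auto
    then show ?thesis
      using psi_lam_of[OF assms(1,2)] T that by (simp add: psi_def)
  qed
  then show ?thesis
    using form_ii T lam unfolding is_form_i_def is_form_ii_def by (auto intro!: sum.cong)
qed

lemma map_nth_pred_upt: "map (\<lambda>k. xs ! (k - 1)) [1..<length xs + 1] = xs"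
  by (simp add: map_Suc_upt[symmetric] map_nth o_def del: upt_Suc)

lemma exists_maps_with_lam_of:
  fixes a :: "nat \<Rightarrow> 'a"
  assumes inj: "inj_on a {1..l}" and "N > 0" and lam: "\<forall>\<nu>\<in>{1..l}. prob_vec_N l N (lam \<nu>)"
  obtains T where "\<forall>k\<in>{1..N}. \<forall>x\<in>a ` {1..l}. T k x \<in> a ` {1..l}"
    and "\<forall>\<nu>\<in>{1..l}. \<forall>i\<in>{1..l}. lam \<nu> i = lam_of a N T \<nu> i"
proof
  define T where "T k x = a (index_seq l N (lam (inv_into {1..l} a x)) ! (k - 1))" for k x
  have T_list: "map (\<lambda>k. T k (a \<nu>)) [1..<N+1] = map a (index_seq l N (lam \<nu>))"
    if "\<nu> \<in> {1..l}" for \<nu>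
  proof -
    have len: "length (index_seq l N (lam \<nu>)) = N"
      using length_index_seq_prob_vec_N lam that by blast
    have "map (\<lambda>k. T k (a \<nu>)) [1..<N+1] = map a (map (\<lambda>k. index_seq l N (lam \<nu>) ! (k - 1)) [1..<N+1])"
      using inj that by (simp add: T_def del: upt_Suc)
    also have "\<dots> = map a (index_seq l N (lam \<nu>))"
      using map_nth_pred_upt[of "index_seq l N (lam \<nu>)"] unfolding len by (simp only:)
    finally show ?thesis .
  qed
  show "\<forall>k\<in>{1..N}. \<forall>x\<in>a ` {1..l}. T k x \<in> a ` {1..l}"
  proof (intro ballI)
    fix k x assume k: "k \<in> {1..N}" and "x \<in> a ` {1..l}"
    then obtain \<nu> where \<nu>: "\<nu> \<in> {1..l}" "x = a \<nu>" by blast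
    have "T k x \<in> set (map (\<lambda>k. T k (a \<nu>)) [1..<N+1])" using k \<nu>(2) by (auto simp del: upt_Suc)
    then have "T k x \<in> a ` set (index_seq l N (lam \<nu>))" by (simp only: T_list[OF \<nu>(1)] set_map)
    then show "T k x \<in> a ` {1..l}" using set_index_seq by blast
  qed
  show "\<forall>\<nu>\<in>{1..l}. \<forall>i\<in>{1..l}. lam \<nu> i = lam_of a N T \<nu> i"
    using T_list empirical_vec_map_index_seq[OF inj lam[rule_format] \<open>N > 0\<close>]
    by (simp add: lam_of_eq_empirical_vec)
qed

theorem proposition5p2:
  fixes a :: "nat \<Rightarrow> 'a" and l N :: nat and lstar :: "nat \<Rightarrow> real" and g :: "'a list \<Rightarrow> real"
  assumes "inj_on a {1..l}" and "N \<ge> 2" and "prob_vec l lstar" and "prob_on_XN a l N g"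
  shows "((\<exists>T \<alpha>. is_form_i a l N lstar g T \<alpha>) \<longleftrightarrow> (\<exists>lam \<alpha>. is_form_ii a l N lstar g lam \<alpha>))
    \<and> (\<forall>T \<alpha>. is_form_i a l N lstar g T \<alpha> \<longrightarrow> is_form_ii a l N lstar g (lam_of a N T) \<alpha>)
    \<and> (\<forall>lam \<alpha> T. is_form_ii a l N lstar g lam \<alpha>
          \<and> (\<forall>k\<in>{1..N}. \<forall>x\<in>a ` {1..l}. T k x \<in> a ` {1..l})
          \<and> (\<forall>\<nu>\<in>{1..l}. \<forall>i\<in>{1..l}. lam \<nu> i = lam_of a N T \<nu> i)
        \<longrightarrow> is_form_i a l N lstar g T \<alpha>)"
proof -
  have inj: "inj_on a {1..l}" and N: "N > 0" using assms(1,2) by auto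
  have ii_imp_i: "\<exists>T \<alpha>. is_form_i a l N lstar g T \<alpha>" if form_ii: "is_form_ii a l N lstar g lam \<alpha>" for lam \<alpha>
  proof -
    have "\<forall>\<nu>\<in>{1..l}. prob_vec_N l N (lam \<nu>)" using form_ii unfolding is_form_ii_def by blast
    then obtain T where "\<forall>k\<in>{1..N}. \<forall>x\<in>a ` {1..l}. T k x \<in> a ` {1..l}"
      and "\<forall>\<nu>\<in>{1..l}. \<forall>i\<in>{1..l}. lam \<nu> i = lam_of a N T \<nu> i"
      by (rule exists_maps_with_lam_of[OF inj N])
    then show ?thesis using is_form_ii_imp_is_form_i[OF inj N form_ii] by blast
  qed
  show ?thesis
    using is_form_i_imp_is_form_ii[OF inj N] is_form_ii_imp_is_form_i[OF inj N] ii_imp_i by blast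
qed

end
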